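(* Let $G$ be a totally disconnected, locally compact group and $\mathcal{H}$ a group of automorphisms of $G$. Then the set $\mathcal{H}_{FC_d}:=\{\varphi\in\mathcal{H}:\varphi^{\mathcal{H}}\text{ is bounded}\}$ is a normal subgroup of $\mathcal{H}$, and for any such $\mathcal{H}$ we have $(\mathcal{H}_{FC_d})_{FC_d}=\mathcal{H}_{FC_d}$.
   Context: Automorphisms are continuous with continuous inverse. $\mathcal{B}(G)$ is the set of compact, open subgroups of $G$ with metric $d(V,W)=\log\bigl(|V:V\cap W|\cdot|W:W\cap V|\bigr)$. A set $B$ of automorphisms of $G$ is bounded if $B.V=\{\beta(V):\beta\in B\}$ has bounded diameter in $\mathcal{B}(G)$ for some (equivalently every) $V\in\mathcal{B}(G)$. For a group $\mathcal{K}$ of automorphisms and $\varphi\in\mathcal{K}$, $\varphi^{\mathcal{K}}=\{\psi\varphi\psi^{-1}:\psi\in\mathcal{K}\}$, and $\mathcal{K}_{FC_d}=\{\varphi\in\mathcal{K}:\varphi^{\mathcal{K}}\text{ bounded}\}$; in particular $(\mathcal{H}_{FC_d})_{FC_d}$ uses conjugation by elements of $\mathcal{H}_{FC_d}$ only. *)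

theory Defs
  imports "HOL-Analysis.Analysis" "HOL-Algebra.Algebra"
begin

definition topological_group :: "'a monoid \<Rightarrow> 'a topology \<Rightarrow> bool" where
  "topological_group G T \<longleftrightarrow> group G \<and> topspace T = carrier G \<and>
     continuous_map (prod_topology T T) T (\<lambda>p. fst p \<otimes>\<^bsub>G\<^esub> snd p) \<and>
     continuous_map T T (\<lambda>x. inv\<^bsub>G\<^esub> x)"

definition totally_disconnected_space :: "'a topology \<Rightarrow> bool" where
  "totally_disconnected_space T \<longleftrightarrow>
     (\<forall>S. connectedin T S \<longrightarrow> (\<forall>x\<in>S. \<forall>y\<in>S. x = y))"

definition top_auto :: "'a monoid \<Rightarrow> 'a topology \<Rightarrow> ('a \<Rightarrow> 'a) set" where
  "top_auto G T = {\<phi> \<in> auto G. homeomorphic_map T T \<phi>}"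

definition CO_subgroups :: "'a monoid \<Rightarrow> 'a topology \<Rightarrow> 'a set set" where
  "CO_subgroups G T = {V. subgroup V G \<and> compactin T V \<and> openin T V}"

definition sg_index :: "'a monoid \<Rightarrow> 'a set \<Rightarrow> 'a set \<Rightarrow> nat" where
  "sg_index G V U = card {U #>\<^bsub>G\<^esub> v | v. v \<in> V}"

definition CO_dist :: "'a monoid \<Rightarrow> 'a set \<Rightarrow> 'a set \<Rightarrow> real" where
  "CO_dist G V W = ln (real (sg_index G V (V \<inter> W) * sg_index G W (W \<inter> V)))"

definition bounded_auts :: "'a monoid \<Rightarrow> 'a topology \<Rightarrow> ('a \<Rightarrow> 'a) set \<Rightarrow> bool" where
  "bounded_auts G T B \<longleftrightarrow> (\<exists>V \<in> CO_subgroups G T. \<exists>M::real.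
      \<forall>\<beta>1\<in>B. \<forall>\<beta>2\<in>B. CO_dist G (\<beta>1 ` V) (\<beta>2 ` V) \<le> M)"

definition conj_class :: "'a monoid \<Rightarrow> ('a \<Rightarrow> 'a) set \<Rightarrow> ('a \<Rightarrow> 'a) \<Rightarrow> ('a \<Rightarrow> 'a) set" where
  "conj_class G H \<phi> = {\<psi> \<otimes>\<^bsub>BijGroup (carrier G)\<^esub> \<phi> \<otimes>\<^bsub>BijGroup (carrier G)\<^esub>
                          inv\<^bsub>BijGroup (carrier G)\<^esub> \<psi> | \<psi>. \<psi> \<in> H}"

definition FC_d :: "'a monoid \<Rightarrow> 'a topology \<Rightarrow> ('a \<Rightarrow> 'a) set \<Rightarrow> ('a \<Rightarrow> 'a) set" where
  "FC_d G T H = {\<phi> \<in> H. bounded_auts G T (conj_class G H \<phi>)}"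

end

theory Submission
  imports Defs
begin

text \<open>By van Dantzig's theorem \<open>G\<close> has a compact open subgroup. The index distance is a
  metric on such subgroups on which automorphisms act by isometries; its triangle inequality is
  the index estimate \<open>|A : A \<inter> C| \<le> |A : A \<inter> B| \<cdot> |B : B \<inter> C|\<close>. Hence a set \<open>B\<close> of
  automorphisms is bounded iff \<open>d(\<beta>V, V)\<close> is bounded over \<open>\<beta> \<in> B\<close>, for one and then every
  compact open \<open>V\<close>. In this form boundedness passes to products and inverses of sets, because
  \<open>d(\<beta>\<gamma>V, V) \<le> d(\<gamma>V, V) + d(\<beta>V, V)\<close> and \<open>d(\<beta>\<^sup>-\<^sup>1V, V) = d(V, \<beta>V)\<close>. As conjugacy
  classes satisfy \<open>(\<phi>\<theta>)\<^sup>H \<subseteq> \<phi>\<^sup>H\<theta>\<^sup>H\<close>, \<open>(\<phi>\<^sup>-\<^sup>1)\<^sup>H = (\<phi>\<^sup>H)\<^sup>-\<^sup>1\<close> and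
  \<open>(\<psi>\<phi>\<psi>\<^sup>-\<^sup>1)\<^sup>H = \<phi>\<^sup>H\<close>, the bounded classes form a normal subgroup. Idempotence holds
  because conjugacy classes only shrink when \<open>H\<close> is replaced by a subgroup.\<close>

lemma card_image_le_if_coarser:
  assumes fin: "finite (f ` S)"
    and coarser: "\<And>x y. x \<in> S \<Longrightarrow> y \<in> S \<Longrightarrow> f x = f y \<Longrightarrow> g x = g y"
  shows "finite (g ` S) \<and> card (g ` S) \<le> card (f ` S)"
proof -
  have "g ` S = (\<lambda>c. g (inv_into S f c)) ` f ` S"
  proof (intro equalityI image_subsetI)
    fix x assume "x \<in> S"
    then have "g x = g (inv_into S f (f x))"
      using f_inv_into_f[of "f x" f S] by (intro coarser) (auto intro: inv_into_into)
    then show "g x \<in> (\<lambda>c. g (inv_into S f c)) ` f ` S"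
      using \<open>x \<in> S\<close> by blast
  next
    fix c assume "c \<in> f ` S"
    then show "g (inv_into S f c) \<in> g ` S" by (blast intro: inv_into_into)
  qed
  then show ?thesis using fin by (metis card_image_le finite_imageI)
qed

lemma sg_index_eq_card_image: "sg_index G V U = card ((\<lambda>v. U #>\<^bsub>G\<^esub> v) ` V)"
  by (simp add: sg_index_def Setcompr_eq_image)

context group
begin

lemma rcos_eq_iff:
  assumes "subgroup K G" "x \<in> carrier G" "y \<in> carrier G"
  shows "K #> x = K #> y \<longleftrightarrow> x \<otimes> inv y \<in> K"
  using assms subgroup.rcos_module[OF assms(1) is_group assms(3,2)]
  by (metis repr_independence repr_independenceD)

lemma mem_rcos_iff:
  assumes "V \<subseteq> carrier G" "g \<in> carrier G"
  shows "x \<in> V #> g \<longleftrightarrow> x \<in> carrier G \<and> x \<otimes> inv g \<in> V"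
proof
  assume "x \<in> V #> g"
  then obtain h where "h \<in> V" "x = h \<otimes> g" unfolding r_coset_def by blast
  then show "x \<in> carrier G \<and> x \<otimes> inv g \<in> V" using assms by (auto simp: m_assoc)
next
  assume x: "x \<in> carrier G \<and> x \<otimes> inv g \<in> V"
  then have "x = (x \<otimes> inv g) \<otimes> g" using assms by (simp add: m_assoc)
  then show "x \<in> V #> g" using x unfolding r_coset_def by blast
qed

lemma mem_lcos_iff:
  assumes "V \<subseteq> carrier G" "g \<in> carrier G"
  shows "x \<in> g <# V \<longleftrightarrow> x \<in> carrier G \<and> inv g \<otimes> x \<in> V"
proof
  assume "x \<in> g <# V"
  then obtain h where "h \<in> V" "x = g \<otimes> h" unfolding l_coset_def by blast
  then show "x \<in> carrier G \<and> inv g \<otimes> x \<in> V" using assms by (auto simp: m_assoc[symmetric])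
next
  assume x: "x \<in> carrier G \<and> inv g \<otimes> x \<in> V"
  then have "x = g \<otimes> (inv g \<otimes> x)" using assms by (simp add: m_assoc[symmetric])
  then show "x \<in> g <# V" using x unfolding l_coset_def by blast
qed

lemma card_rcosets_le_if_finer:
  assumes K: "subgroup K G" and L: "subgroup L G" and "S \<subseteq> A" "A \<subseteq> carrier G"
    and fin: "finite ((\<lambda>a. L #> a) ` A)"
    and finer: "\<And>x y. x \<in> S \<Longrightarrow> y \<in> S \<Longrightarrow> x \<otimes> inv y \<in> L \<Longrightarrow> x \<otimes> inv y \<in> K"
  shows "finite ((\<lambda>x. K #> x) ` S) \<and> card ((\<lambda>x. K #> x) ` S) \<le> card ((\<lambda>a. L #> a) ` A)"
proof -
  have sub: "(\<lambda>x. L #> x) ` S \<subseteq> (\<lambda>a. L #> a) ` A"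
    using \<open>S \<subseteq> A\<close> by blast
  have "finite ((\<lambda>x. K #> x) ` S) \<and> card ((\<lambda>x. K #> x) ` S) \<le> card ((\<lambda>x. L #> x) ` S)"
  proof (rule card_image_le_if_coarser)
    show "finite ((\<lambda>x. L #> x) ` S)" using finite_subset[OF sub fin] .
    fix x y assume "x \<in> S" "y \<in> S" "L #> x = L #> y"
    then show "K #> x = K #> y"
      using rcos_eq_iff[OF K] rcos_eq_iff[OF L] finer assms(3,4) by (meson subsetD)
  qed
  then show ?thesis using card_mono[OF fin sub] by linarith
qed

lemma card_rcosets_tower_le:
  assumes K: "subgroup K G" and L: "subgroup L G" and A: "subgroup A G"
    and "K \<subseteq> L" and "L \<subseteq> A"
    and finA: "finite ((\<lambda>a. L #> a) ` A)" and finL: "finite ((\<lambda>l. K #> l) ` L)"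
  shows "finite ((\<lambda>a. K #> a) ` A) \<and>
    card ((\<lambda>a. K #> a) ` A) \<le> card ((\<lambda>a. L #> a) ` A) * card ((\<lambda>l. K #> l) ` L)"
proof -
  let ?CA = "(\<lambda>a. L #> a) ` A" and ?CL = "(\<lambda>l. K #> l) ` L"
  define rep where "rep c = (SOME a. a \<in> A \<and> L #> a = c)" for c
  \<comment> \<open>\<open>K #> a\<close> is determined by \<open>L #> a\<close> and by the \<open>K\<close>-coset of \<open>a \<otimes> inv (rep (L #> a)) \<in> L\<close>.\<close>
  have Ac: "A \<subseteq> carrier G" using A subgroup.subset by blast
  have "(\<lambda>a. K #> a) ` A \<subseteq> (\<lambda>(c, D). D #> rep c) ` (?CA \<times> ?CL)"
  proof (rule image_subsetI)
    fix a assume a: "a \<in> A"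
    define r where "r = rep (L #> a)"
    have r: "r \<in> A \<and> L #> r = L #> a"
      unfolding r_def rep_def by (rule someI[of _ a]) (use a in simp)
    have carr: "a \<in> carrier G" "r \<in> carrier G" using a r Ac by auto
    have l: "a \<otimes> inv r \<in> L" using rcos_eq_iff[OF L carr] r by simp
    have "K #> a = (K #> (a \<otimes> inv r)) #> r"
      using carr subgroup.subset[OF K] by (simp add: coset_mult_assoc m_assoc)
    moreover have "(L #> a, K #> (a \<otimes> inv r)) \<in> ?CA \<times> ?CL" using a l by blast
    ultimately show "K #> a \<in> (\<lambda>(c, D). D #> rep c) ` (?CA \<times> ?CL)"
      unfolding r_def by force
  qed
  moreover have "finite (?CA \<times> ?CL)" using finA finL by simp
  moreover have "card ((\<lambda>(c, D). D #> rep c) ` (?CA \<times> ?CL)) \<le> card ?CA * card ?CL"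
    using card_image_le[OF \<open>finite (?CA \<times> ?CL)\<close>] by (simp add: card_cartesian_product)
  ultimately show ?thesis by (meson card_mono finite_imageI finite_subset le_trans)
qed

lemma card_rcosets_Int_triangle:
  assumes A: "subgroup A G" and B: "subgroup B G" and C: "subgroup C G"
    and finAB: "finite ((\<lambda>a. (A \<inter> B) #> a) ` A)" and finBC: "finite ((\<lambda>b. (B \<inter> C) #> b) ` B)"
  shows "finite ((\<lambda>a. (A \<inter> C) #> a) ` A) \<and>
    card ((\<lambda>a. (A \<inter> C) #> a) ` A)
      \<le> card ((\<lambda>a. (A \<inter> B) #> a) ` A) * card ((\<lambda>b. (B \<inter> C) #> b) ` B)"
proof -
  have AB: "subgroup (A \<inter> B) G" and BC: "subgroup (B \<inter> C) G" and AC: "subgroup (A \<inter> C) G"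
    and ABC: "subgroup (A \<inter> B \<inter> C) G"
    using A B C subgroup_Int by blast+
  have Ac: "A \<subseteq> carrier G" and Bc: "B \<subseteq> carrier G" using A B subgroup.subset by blast+
  have m1: "finite ((\<lambda>x. (A \<inter> B \<inter> C) #> x) ` (A \<inter> B)) \<and>
      card ((\<lambda>x. (A \<inter> B \<inter> C) #> x) ` (A \<inter> B)) \<le> card ((\<lambda>b. (B \<inter> C) #> b) ` B)"
  proof (rule card_rcosets_le_if_finer[OF ABC BC _ Bc finBC])
    fix x y assume "x \<in> A \<inter> B" "y \<in> A \<inter> B" "x \<otimes> inv y \<in> B \<inter> C"
    then show "x \<otimes> inv y \<in> A \<inter> B \<inter> C" using A by (simp add: subgroup.m_closed subgroup.m_inv_closed)
  qed blast
  have m2: "finite ((\<lambda>a. (A \<inter> B \<inter> C) #> a) ` A) \<and>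
      card ((\<lambda>a. (A \<inter> B \<inter> C) #> a) ` A)
        \<le> card ((\<lambda>a. (A \<inter> B) #> a) ` A) * card ((\<lambda>x. (A \<inter> B \<inter> C) #> x) ` (A \<inter> B))"
    by (rule card_rcosets_tower_le[OF ABC AB A _ _ finAB]) (use m1 in auto)
  have m3: "finite ((\<lambda>a. (A \<inter> C) #> a) ` A) \<and>
      card ((\<lambda>a. (A \<inter> C) #> a) ` A) \<le> card ((\<lambda>a. (A \<inter> B \<inter> C) #> a) ` A)"
    by (rule card_rcosets_le_if_finer[OF AC ABC _ Ac]) (use m2 in auto)
  show ?thesis using m1 m2 m3 by (meson le_trans mult_le_mono2)
qed

lemma image_rcos_hom:
  assumes "\<beta> \<in> hom G G" "K \<subseteq> carrier G" "x \<in> carrier G"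
  shows "\<beta> ` (K #> x) = (\<beta> ` K) #> \<beta> x"
  using assms by (force simp: r_coset_def hom_mult image_iff)

lemma generate_subset_if_right_stable:
  assumes U: "U \<subseteq> carrier G" "\<one> \<in> U" and V: "V \<subseteq> carrier G"
    and V_inv: "\<And>v. v \<in> V \<Longrightarrow> inv v \<in> V"
    and stable: "\<And>u v. u \<in> U \<Longrightarrow> v \<in> V \<Longrightarrow> u \<otimes> v \<in> U"
  shows "generate G V \<subseteq> U"
proof
  fix x assume x: "x \<in> generate G V"
  have "\<forall>u\<in>U. u \<otimes> x \<in> U" using x
  proof (induction x rule: generate.induct)
    case (eng h1 h2)
    have "h1 \<in> carrier G" "h2 \<in> carrier G" using eng.hyps generate_incl[OF V] by auto
    then show ?case using eng.IH U by (auto simp: m_assoc[symmetric])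
  qed (use U V_inv stable in auto)
  then show "x \<in> U" using U x generate_incl[OF V] by (metis l_one subsetD)
qed

end

lemma sg_index_image_auto:
  fixes G :: "'a monoid" (structure)
  assumes "group G" and b: "\<beta> \<in> auto G" and A: "A \<subseteq> carrier G" and B: "B \<subseteq> carrier G"
  shows "sg_index G (\<beta> ` A) (\<beta> ` A \<inter> \<beta> ` B) = sg_index G A (A \<inter> B)"
proof -
  interpret group G by fact
  have hom: "\<beta> \<in> hom G G" and inj: "inj_on \<beta> (carrier G)"
    using b unfolding auto_def Bij_def bij_betw_def by auto
  have Int: "\<beta> ` A \<inter> \<beta> ` B = \<beta> ` (A \<inter> B)" using inj_on_image_Int[OF inj A B] by simp
  let ?S = "(\<lambda>x. (A \<inter> B) #> x) ` A"
  have "(\<lambda>y. \<beta> ` (A \<inter> B) #> y) ` \<beta> ` A = (\<lambda>x. \<beta> ` (A \<inter> B) #> \<beta> x) ` A"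
    by (simp add: image_image)
  also have "\<dots> = (\<lambda>x. \<beta> ` ((A \<inter> B) #> x)) ` A"
    using image_rcos_hom[OF hom, of "A \<inter> B"] A by (intro image_cong) auto
  finally have cosets: "(\<lambda>y. \<beta> ` (A \<inter> B) #> y) ` \<beta> ` A = image \<beta> ` ?S"
    by (simp add: image_image)
  have "\<Union>?S \<subseteq> carrier G" using A by (auto simp: r_coset_def)
  then have "inj_on (image \<beta>) ?S" using inj_on_image inj_on_subset[OF inj] by blast
  then show ?thesis by (simp add: sg_index_eq_card_image Int cosets card_image)
qed

lemma CO_dist_image_auto:
  fixes G :: "'a monoid" (structure)
  assumes "group G" "\<beta> \<in> auto G" "A \<subseteq> carrier G" "B \<subseteq> carrier G"
  shows "CO_dist G (\<beta> ` A) (\<beta> ` B) = CO_dist G A B"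
  using sg_index_image_auto[OF assms] sg_index_image_auto[OF assms(1,2,4,3)]
  by (simp add: CO_dist_def)

lemma CO_dist_self:
  fixes G :: "'a monoid" (structure)
  assumes "group G" "subgroup A G"
  shows "CO_dist G A A = 0"
proof -
  have "A #> a = A" if "a \<in> A" for a
    using group.coset_join2[OF assms(1) subgroup.mem_carrier[OF assms(2) that] assms(2) that] .
  then have "(\<lambda>a. A #> a) ` A = {A}"
    using subgroup.one_closed[OF assms(2)] by force
  then show ?thesis by (simp add: CO_dist_def sg_index_eq_card_image)
qed

lemma CO_dist_commute: "CO_dist G A B = CO_dist G B A"
  by (simp add: CO_dist_def mult.commute)

lemma connected_component_of_set_totally_disconnected:
  assumes "totally_disconnected_space T" "x \<in> topspace T"
  shows "connected_component_of_set T x = {x}"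
  using assms connectedin_connected_component_of[of T x] connected_component_of_refl[of T x]
  unfolding totally_disconnected_space_def by blast

lemma compact_open_nhd_if_trivial_component:
  assumes lc: "locally_compact_space T" and haus: "Hausdorff_space T" and x: "x \<in> topspace T"
    and comp: "connected_component_of_set T x = {x}"
  obtains U where "openin T U" "compactin T U" "x \<in> U"
proof -
  obtain U0 K where U0: "openin T U0" "compactin T K" "x \<in> U0" "U0 \<subseteq> K"
    using lc x unfolding locally_compact_space_def by blast
  have "{x} \<in> connected_components_of T"
    unfolding connected_components_of_def using comp x by force
  moreover have "compactin T {x}" "{x} \<subseteq> U0" using x U0(3) by simp_all
  ultimately obtain U V where UV: "openin T U" "openin T V" "disjnt U V" "U \<union> V = topspace T"
    "{x} \<subseteq> U" "U \<subseteq> U0"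
    using wilder_locally_compact_component_thm[OF lc haus _ _ U0(1)] by blast
  have "topspace T - U = V" using UV(3,4) by (auto simp: disjnt_def)
  then have "closedin T U" using UV(2,4) unfolding closedin_def by auto
  then have "compactin T U" using closed_compactin[OF U0(2)] UV(6) U0(4) by blast
  then show thesis using that UV by blast
qed

locale topgroup =
  fixes G :: "'a monoid" (structure) and T :: "'a topology"
  assumes topological_group: "topological_group G T"
begin

sublocale group G
  using topological_group by (simp add: topological_group_def)

lemma topspace_eq: "topspace T = carrier G"
  using topological_group by (simp add: topological_group_def)

lemma continuous_map_mult: "continuous_map (prod_topology T T) T (\<lambda>p. fst p \<otimes> snd p)"
  using topological_group by (simp add: topological_group_def)

lemma continuous_map_inv: "continuous_map T T (\<lambda>x. inv x)"
  using topological_group by (simp add: topological_group_def)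

lemma continuous_map_lmult:
  assumes "g \<in> carrier G"
  shows "continuous_map T T (\<lambda>x. g \<otimes> x)"
proof -
  have "continuous_map T (prod_topology T T) (\<lambda>x. (g, x))"
    by (intro continuous_map_pairedI) (use assms in \<open>auto simp: topspace_eq\<close>)
  from continuous_map_compose[OF this continuous_map_mult] show ?thesis by (simp add: o_def)
qed

lemma continuous_map_rmult:
  assumes "g \<in> carrier G"
  shows "continuous_map T T (\<lambda>x. x \<otimes> g)"
proof -
  have "continuous_map T (prod_topology T T) (\<lambda>x. (x, g))"
    by (intro continuous_map_pairedI) (use assms in \<open>auto simp: topspace_eq\<close>)
  from continuous_map_compose[OF this continuous_map_mult] show ?thesis by (simp add: o_def)
qed

lemma openin_rcoset:
  assumes V: "openin T V" and g: "g \<in> carrier G"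
  shows "openin T (V #> g)"
proof -
  have "V \<subseteq> carrier G" using openin_subset[OF V] by (simp add: topspace_eq)
  then have "V #> g = {x \<in> topspace T. x \<otimes> inv g \<in> V}"
    using mem_rcos_iff[OF _ g] by (auto simp: topspace_eq)
  then show ?thesis
    using openin_continuous_map_preimage[OF continuous_map_rmult[OF inv_closed[OF g]] V] by simp
qed

lemma openin_lcoset:
  assumes V: "openin T V" and g: "g \<in> carrier G"
  shows "openin T (g <# V)"
proof -
  have "V \<subseteq> carrier G" using openin_subset[OF V] by (simp add: topspace_eq)
  then have "g <# V = {x \<in> topspace T. inv g \<otimes> x \<in> V}"
    using mem_lcos_iff[OF _ g] by (auto simp: topspace_eq)
  then show ?thesis
    using openin_continuous_map_preimage[OF continuous_map_lmult[OF inv_closed[OF g]] V] by simp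
qed

lemma Hausdorff_space_if_closedin_one:
  assumes "closedin T {\<one>}"
  shows "Hausdorff_space T"
proof -
  have "continuous_map (prod_topology T T) (prod_topology T T) (\<lambda>p. (fst p, inv (snd p)))"
    by (intro continuous_map_pairedI continuous_map_fst
        continuous_map_compose[OF continuous_map_snd continuous_map_inv, unfolded o_def])
  from continuous_map_compose[OF this continuous_map_mult]
  have quotient: "continuous_map (prod_topology T T) T (\<lambda>p. fst p \<otimes> inv (snd p))"
    by (simp add: o_def)
  have "\<And>a b. a \<in> carrier G \<Longrightarrow> b \<in> carrier G \<Longrightarrow> a \<otimes> inv b = \<one> \<longleftrightarrow> a = b"
    by (metis inv_closed inv_equality inv_inv r_inv)
  then have "(\<lambda>x. (x, x)) ` topspace T
      = {p \<in> topspace (prod_topology T T). fst p \<otimes> inv (snd p) \<in> {\<one>}}"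
    by (auto simp: image_iff topspace_eq)
  then show ?thesis
    using closedin_continuous_map_preimage[OF quotient assms]
    by (simp add: Hausdorff_space_closedin_diagonal)
qed

lemma openin_subgroup_if_nhd:
  assumes S: "subgroup S G" and V: "openin T V" "\<one> \<in> V" "V \<subseteq> S"
  shows "openin T S"
proof (subst openin_subopen, intro ballI)
  fix g assume g: "g \<in> S"
  then have gc: "g \<in> carrier G" using S subgroup.subset by blast
  have "g <# V \<subseteq> S" using V(3) g S unfolding l_coset_def by (auto intro: subgroup.m_closed)
  moreover have "g \<in> g <# V" using V(2) gc unfolding l_coset_def by force
  ultimately show "\<exists>U. openin T U \<and> g \<in> U \<and> U \<subseteq> S"
    using openin_lcoset[OF V(1) gc] by blast
qed

lemma closedin_open_subgroup:
  assumes S: "subgroup S G" and So: "openin T S"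
  shows "closedin T S"
proof -
  have Sc: "S \<subseteq> carrier G" using S subgroup.subset by blast
  have "topspace T - S = (\<Union>g \<in> carrier G - S. g <# S)"
  proof (intro equalityI subsetI)
    fix x assume "x \<in> topspace T - S"
    moreover have "x \<in> x <# S" if "x \<in> carrier G"
      using that S unfolding l_coset_def by (force intro: subgroup.one_closed)
    ultimately show "x \<in> (\<Union>g \<in> carrier G - S. g <# S)" by (auto simp: topspace_eq)
  next
    fix x assume "x \<in> (\<Union>g \<in> carrier G - S. g <# S)"
    then obtain g s where gs: "g \<in> carrier G - S" "s \<in> S" "x = g \<otimes> s"
      unfolding l_coset_def by blast
    have sc: "s \<in> carrier G" using gs Sc by blast
    have "x \<notin> S"
    proof
      assume "x \<in> S"
      then have "x \<otimes> inv s \<in> S" using S gs by (simp add: subgroup.m_closed subgroup.m_inv_closed)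
      moreover have "x \<otimes> inv s = g" using gs sc by (simp add: m_assoc)
      ultimately show False using gs by blast
    qed
    then show "x \<in> topspace T - S" using gs sc by (simp add: topspace_eq)
  qed
  moreover have "openin T (\<Union>g \<in> carrier G - S. g <# S)"
    by (intro openin_Union) (auto intro: openin_lcoset[OF So])
  ultimately show ?thesis using Sc unfolding closedin_def by (simp add: topspace_eq)
qed

lemma right_stable_symmetric_nhd:
  assumes U: "openin T U" "compactin T U"
  obtains V where "openin T V" "\<one> \<in> V" "\<And>v. v \<in> V \<Longrightarrow> inv v \<in> V"
    "\<And>u v. u \<in> U \<Longrightarrow> v \<in> V \<Longrightarrow> u \<otimes> v \<in> U"
proof -
  define W where "W = {p \<in> topspace (prod_topology T T). fst p \<otimes> snd p \<in> U}"
  have W_open: "openin (prod_topology T T) W"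
    unfolding W_def using openin_continuous_map_preimage[OF continuous_map_mult U(1)] by simp
  have "U \<times> {\<one>} \<subseteq> W"
    unfolding W_def using openin_subset[OF U(1)] by (auto simp: topspace_eq)
  then obtain U1 N where "openin T U1" "openin T N" "U \<subseteq> U1" "\<one> \<in> N" "U1 \<times> N \<subseteq> W"
    using tube_lemma_left[OF W_open U(2), where y = \<one>] by (auto simp: topspace_eq)
  then have N: "openin T N" "\<one> \<in> N" "U \<times> N \<subseteq> W" by blast+
  define V where "V = N \<inter> {x \<in> topspace T. inv x \<in> N}"
  show thesis
  proof
    show "openin T V" unfolding V_def
      using openin_Int[OF N(1) openin_continuous_map_preimage[OF continuous_map_inv N(1)]] .
    show "\<one> \<in> V" using N(2) by (simp add: V_def topspace_eq)
    show "inv v \<in> V" if "v \<in> V" for v using that by (auto simp: V_def topspace_eq)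
    show "u \<otimes> v \<in> U" if "u \<in> U" "v \<in> V" for u v
    proof -
      have "(u, v) \<in> W" using that N(3) by (auto simp: V_def)
      then show ?thesis by (simp add: W_def)
    qed
  qed
qed

theorem van_Dantzig:
  assumes td: "totally_disconnected_space T" and lc: "locally_compact_space T"
  shows "CO_subgroups G T \<noteq> {}"
proof -
  have one: "\<one> \<in> topspace T" by (simp add: topspace_eq)
  have comp: "connected_component_of_set T \<one> = {\<one>}"
    using connected_component_of_set_totally_disconnected[OF td one] .
  then have "Hausdorff_space T"
    using closedin_connected_component_of[of T \<one>] by (intro Hausdorff_space_if_closedin_one) simp
  then obtain U where U: "openin T U" "compactin T U" "\<one> \<in> U"
    using compact_open_nhd_if_trivial_component[OF lc _ one comp] by blast
  obtain V where V: "openin T V" "\<one> \<in> V" "\<And>v. v \<in> V \<Longrightarrow> inv v \<in> V"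
    "\<And>u v. u \<in> U \<Longrightarrow> v \<in> V \<Longrightarrow> u \<otimes> v \<in> U"
    using right_stable_symmetric_nhd[OF U(1,2)] by blast
  have Vc: "V \<subseteq> carrier G" and Uc: "U \<subseteq> carrier G"
    using openin_subset[OF V(1)] openin_subset[OF U(1)] by (simp_all add: topspace_eq)
  let ?S = "generate G V"
  have S: "subgroup ?S G" using generate_is_subgroup[OF Vc] .
  have "openin T ?S"
    using openin_subgroup_if_nhd[OF S V(1,2)] generate.incl[of _ V G] by blast
  moreover have "compactin T ?S"
    using closed_compactin[OF U(2) generate_subset_if_right_stable[OF Uc U(3) Vc V(3,4)]
        closedin_open_subgroup[OF S calculation]] .
  ultimately show ?thesis using S unfolding CO_subgroups_def by blast
qed

lemma CO_subgroup: "V \<in> CO_subgroups G T \<Longrightarrow> subgroup V G"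
  by (simp add: CO_subgroups_def)

lemma CO_subgroup_subset_carrier: "V \<in> CO_subgroups G T \<Longrightarrow> V \<subseteq> carrier G"
  by (simp add: CO_subgroups_def subgroup.subset)

lemma finite_rcosets_CO_Int:
  assumes A: "A \<in> CO_subgroups G T" and B: "B \<in> CO_subgroups G T"
  shows "finite ((\<lambda>a. (A \<inter> B) #> a) ` A)"
proof -
  let ?K = "A \<inter> B" and ?U = "(\<lambda>a. (A \<inter> B) #> a) ` A"
  have K: "subgroup ?K G" using A B by (simp add: CO_subgroups_def subgroup_Int)
  have "openin T ?K" using A B by (simp add: CO_subgroups_def openin_Int)
  have Ac: "A \<subseteq> carrier G" using CO_subgroup_subset_carrier[OF A] .
  have "\<forall>D\<in>?U. openin T D" using openin_rcoset[OF \<open>openin T ?K\<close>] Ac by blast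
  moreover have "A \<subseteq> \<Union>?U" using rcos_self[OF _ K] Ac by blast
  moreover have "compactin T A" using A by (simp add: CO_subgroups_def)
  ultimately obtain F where F: "finite F" "F \<subseteq> ?U" "A \<subseteq> \<Union>F"
    unfolding compactin_def by meson
  have "?U \<subseteq> F"
  proof
    fix D assume "D \<in> ?U"
    then obtain a where a: "a \<in> A" "D = ?K #> a" by blast
    then obtain E where E: "E \<in> F" "a \<in> E" using F(3) by blast
    then obtain a' where a': "a' \<in> A" "E = ?K #> a'" using F(2) by blast
    then show "D \<in> F" using repr_independence[of a ?K a'] E a K Ac by auto
  qed
  then show ?thesis using F(1) finite_subset by blast
qed

lemma sg_index_CO_pos:
  assumes "U \<in> CO_subgroups G T" "V \<in> CO_subgroups G T"
  shows "0 < sg_index G U (U \<inter> V)"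
proof -
  have "\<one> \<in> U" using CO_subgroup[OF assms(1)] by (rule subgroup.one_closed)
  then show ?thesis
    using finite_rcosets_CO_Int[OF assms] by (auto simp: sg_index_eq_card_image card_gt_0_iff)
qed

lemma sg_index_CO_Int_triangle:
  assumes "U \<in> CO_subgroups G T" "V \<in> CO_subgroups G T" "W \<in> CO_subgroups G T"
  shows "sg_index G U (U \<inter> W) \<le> sg_index G U (U \<inter> V) * sg_index G V (V \<inter> W)"
  using card_rcosets_Int_triangle[OF CO_subgroup[OF assms(1)] CO_subgroup[OF assms(2)]
      CO_subgroup[OF assms(3)] finite_rcosets_CO_Int[OF assms(1,2)] finite_rcosets_CO_Int[OF assms(2,3)]]
  by (simp add: sg_index_eq_card_image)

lemma CO_dist_triangle:
  assumes A: "A \<in> CO_subgroups G T" and B: "B \<in> CO_subgroups G T" and C: "C \<in> CO_subgroups G T"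
  shows "CO_dist G A C \<le> CO_dist G A B + CO_dist G B C"
proof -
  define a1 a2 b1 b2 c1 c2 where "a1 = sg_index G A (A \<inter> B)" "a2 = sg_index G B (B \<inter> A)"
    "b1 = sg_index G B (B \<inter> C)" "b2 = sg_index G C (C \<inter> B)"
    "c1 = sg_index G A (A \<inter> C)" "c2 = sg_index G C (C \<inter> A)"
  have pos: "0 < a1" "0 < a2" "0 < b1" "0 < b2"
    unfolding a1_a2_b1_b2_c1_c2_def using sg_index_CO_pos A B C by blast+
  have c_pos: "0 < c1" "0 < c2"
    unfolding a1_a2_b1_b2_c1_c2_def using sg_index_CO_pos A B C by blast+
  have "c1 \<le> a1 * b1" "c2 \<le> b2 * a2"
    unfolding a1_a2_b1_b2_c1_c2_def using sg_index_CO_Int_triangle A B C by blast+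
  then have "c1 * c2 \<le> (a1 * b1) * (b2 * a2)" by (rule mult_le_mono)
  also have "\<dots> = (a1 * a2) * (b1 * b2)" by (simp only: ac_simps)
  finally have le: "real (c1 * c2) \<le> real (a1 * a2) * real (b1 * b2)"
    by (metis of_nat_le_iff of_nat_mult)
  have "CO_dist G A C = ln (real (c1 * c2))"
    by (simp add: CO_dist_def a1_a2_b1_b2_c1_c2_def)
  also have "\<dots> \<le> ln (real (a1 * a2) * real (b1 * b2))"
    using le c_pos by (intro ln_mono) simp_all
  also have "\<dots> = ln (real (a1 * a2)) + ln (real (b1 * b2))"
    using pos by (simp add: ln_mult)
  also have "\<dots> = CO_dist G A B + CO_dist G B C"
    by (simp add: CO_dist_def a1_a2_b1_b2_c1_c2_def)
  finally show ?thesis .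
qed

lemma top_auto_image_CO:
  assumes b: "\<beta> \<in> top_auto G T" and V: "V \<in> CO_subgroups G T"
  shows "\<beta> ` V \<in> CO_subgroups G T"
proof -
  have hom: "\<beta> \<in> hom G G" and hm: "homeomorphic_map T T \<beta>"
    using b unfolding top_auto_def auto_def by auto
  interpret group_hom G G \<beta> using hom by unfold_locales
  have "subgroup (\<beta> ` V) G"
    using V subgroup_img_is_subgroup by (simp add: CO_subgroups_def)
  moreover have "compactin T (\<beta> ` V)"
    using V image_compactin[OF _ homeomorphic_imp_continuous_map[OF hm]] by (simp add: CO_subgroups_def)
  moreover have "openin T (\<beta> ` V)"
    using V homeomorphic_imp_open_map[OF hm] by (simp add: CO_subgroups_def open_map_def)
  ultimately show ?thesis by (simp add: CO_subgroups_def)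
qed

end

lemma bounded_auts_mono: "B' \<subseteq> B \<Longrightarrow> bounded_auts G T B \<Longrightarrow> bounded_auts G T B'"
  unfolding bounded_auts_def by blast

lemma FC_d_FC_d: "FC_d G T (FC_d G T H) = FC_d G T H"
proof -
  have "conj_class G (FC_d G T H) \<phi> \<subseteq> conj_class G H \<phi>" for \<phi>
    unfolding conj_class_def FC_d_def by blast
  then show ?thesis unfolding FC_d_def bounded_auts_def by blast
qed

locale topgroup_autos = topgroup +
  fixes H :: "('a \<Rightarrow> 'a) set"
  assumes subgroup_H: "subgroup H (BijGroup (carrier G))"
    and H_top_auto: "H \<subseteq> top_auto G T"
begin

abbreviation Sym :: "('a \<Rightarrow> 'a) monoid" where "Sym \<equiv> BijGroup (carrier G)"

sublocale Sym: group Sym by (rule group_BijGroup)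

lemma H_Sym_carrier: "\<beta> \<in> H \<Longrightarrow> \<beta> \<in> carrier Sym"
  using subgroup.mem_carrier[OF subgroup_H] .

lemma H_Bij: "\<beta> \<in> H \<Longrightarrow> \<beta> \<in> Bij (carrier G)"
  using subgroup.subset[OF subgroup_H] by (auto simp: BijGroup_def)

lemma image_Sym_mult:
  "\<beta> \<in> H \<Longrightarrow> \<gamma> \<in> H \<Longrightarrow> V \<subseteq> carrier G \<Longrightarrow> (\<beta> \<otimes>\<^bsub>Sym\<^esub> \<gamma>) ` V = \<beta> ` \<gamma> ` V"
  using H_Bij by (force simp: BijGroup_def compose_def)

lemma image_Sym_one: "V \<subseteq> carrier G \<Longrightarrow> \<one>\<^bsub>Sym\<^esub> ` V = V"
  by (force simp: BijGroup_def)

lemma image_image_Sym_inv: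
  assumes "\<beta> \<in> H" "V \<subseteq> carrier G"
  shows "\<beta> ` (inv\<^bsub>Sym\<^esub> \<beta>) ` V = V"
proof -
  have "inv\<^bsub>Sym\<^esub> \<beta> \<in> H" using subgroup.m_inv_closed[OF subgroup_H assms(1)] .
  then have "\<beta> ` (inv\<^bsub>Sym\<^esub> \<beta>) ` V = (\<beta> \<otimes>\<^bsub>Sym\<^esub> inv\<^bsub>Sym\<^esub> \<beta>) ` V"
    using image_Sym_mult[OF assms(1) _ assms(2)] by simp
  also have "\<dots> = V"
    using Sym.r_inv[OF H_Sym_carrier[OF assms(1)]] image_Sym_one[OF assms(2)] by simp
  finally show ?thesis .
qed

lemma H_image_CO: "\<beta> \<in> H \<Longrightarrow> V \<in> CO_subgroups G T \<Longrightarrow> \<beta> ` V \<in> CO_subgroups G T"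
  using H_top_auto top_auto_image_CO by blast

lemma CO_dist_image_H:
  "\<beta> \<in> H \<Longrightarrow> V \<in> CO_subgroups G T \<Longrightarrow> W \<in> CO_subgroups G T \<Longrightarrow>
    CO_dist G (\<beta> ` V) (\<beta> ` W) = CO_dist G V W"
  using H_top_auto CO_dist_image_auto[OF is_group] CO_subgroup_subset_carrier by (auto simp: top_auto_def)

lemma bounded_auts_iff_displacement:
  assumes B: "B \<subseteq> H" and W: "W \<in> CO_subgroups G T"
  shows "bounded_auts G T B \<longleftrightarrow> (\<exists>M. \<forall>\<beta>\<in>B. CO_dist G (\<beta> ` W) W \<le> M)"
proof
  assume "bounded_auts G T B"
  then obtain V M where V: "V \<in> CO_subgroups G T"
    and M: "\<forall>\<beta>1\<in>B. \<forall>\<beta>2\<in>B. CO_dist G (\<beta>1 ` V) (\<beta>2 ` V) \<le> M"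
    unfolding bounded_auts_def by blast
  show "\<exists>M. \<forall>\<beta>\<in>B. CO_dist G (\<beta> ` W) W \<le> M"
  proof (cases "B = {}")
    case False
    then obtain \<beta>0 where \<beta>0: "\<beta>0 \<in> B" by blast
    have "CO_dist G (\<beta> ` W) W \<le> CO_dist G W V + M + CO_dist G (\<beta>0 ` V) W" if \<beta>: "\<beta> \<in> B" for \<beta>
    proof -
      have CO: "\<beta> ` W \<in> CO_subgroups G T" "\<beta> ` V \<in> CO_subgroups G T" "\<beta>0 ` V \<in> CO_subgroups G T"
        using H_image_CO W V \<beta> \<beta>0 B by blast+
      have "CO_dist G (\<beta> ` W) W \<le> CO_dist G (\<beta> ` W) (\<beta> ` V) + CO_dist G (\<beta> ` V) W"
        using CO_dist_triangle CO W by blast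
      also have "\<dots> \<le> CO_dist G (\<beta> ` W) (\<beta> ` V) + (CO_dist G (\<beta> ` V) (\<beta>0 ` V) + CO_dist G (\<beta>0 ` V) W)"
        using CO_dist_triangle CO W by simp
      also have "CO_dist G (\<beta> ` W) (\<beta> ` V) = CO_dist G W V"
        using CO_dist_image_H \<beta> B V W by blast
      finally show ?thesis using M \<beta> \<beta>0 by fastforce
    qed
    then show ?thesis by blast
  qed simp
next
  assume "\<exists>M. \<forall>\<beta>\<in>B. CO_dist G (\<beta> ` W) W \<le> M"
  then obtain M where M: "\<forall>\<beta>\<in>B. CO_dist G (\<beta> ` W) W \<le> M" by blast
  have "CO_dist G (\<beta>1 ` W) (\<beta>2 ` W) \<le> M + M" if "\<beta>1 \<in> B" "\<beta>2 \<in> B" for \<beta>1 \<beta>2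
  proof -
    have "CO_dist G (\<beta>1 ` W) (\<beta>2 ` W) \<le> CO_dist G (\<beta>1 ` W) W + CO_dist G W (\<beta>2 ` W)"
      using CO_dist_triangle H_image_CO that B W by blast
    moreover have "CO_dist G (\<beta>1 ` W) W \<le> M" "CO_dist G W (\<beta>2 ` W) \<le> M"
      using M that CO_dist_commute[of G W] by auto
    ultimately show ?thesis by linarith
  qed
  then show "bounded_auts G T B" unfolding bounded_auts_def using W by blast
qed

lemma bounded_auts_Sym_mult:
  assumes B1: "B1 \<subseteq> H" "bounded_auts G T B1" and B2: "B2 \<subseteq> H" "bounded_auts G T B2"
  shows "bounded_auts G T {\<beta> \<otimes>\<^bsub>Sym\<^esub> \<gamma> | \<beta> \<gamma>. \<beta> \<in> B1 \<and> \<gamma> \<in> B2}"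
proof -
  obtain V where V: "V \<in> CO_subgroups G T" using B1(2) unfolding bounded_auts_def by blast
  obtain M1 M2 where M1: "\<forall>\<beta>\<in>B1. CO_dist G (\<beta> ` V) V \<le> M1"
    and M2: "\<forall>\<gamma>\<in>B2. CO_dist G (\<gamma> ` V) V \<le> M2"
    using bounded_auts_iff_displacement[OF _ V] B1 B2 by metis
  have "CO_dist G ((\<beta> \<otimes>\<^bsub>Sym\<^esub> \<gamma>) ` V) V \<le> M2 + M1" if "\<beta> \<in> B1" "\<gamma> \<in> B2" for \<beta> \<gamma>
  proof -
    have H: "\<beta> \<in> H" "\<gamma> \<in> H" using that B1 B2 by blast+
    have "CO_dist G (\<beta> ` \<gamma> ` V) V \<le> CO_dist G (\<beta> ` \<gamma> ` V) (\<beta> ` V) + CO_dist G (\<beta> ` V) V"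
      using CO_dist_triangle H_image_CO H V by blast
    also have "CO_dist G (\<beta> ` \<gamma> ` V) (\<beta> ` V) = CO_dist G (\<gamma> ` V) V"
      using CO_dist_image_H H_image_CO H V by blast
    finally show ?thesis
      using M1 M2 that image_Sym_mult[OF H CO_subgroup_subset_carrier[OF V]] by fastforce
  qed
  moreover have "{\<beta> \<otimes>\<^bsub>Sym\<^esub> \<gamma> | \<beta> \<gamma>. \<beta> \<in> B1 \<and> \<gamma> \<in> B2} \<subseteq> H"
    using B1 B2 subgroup.m_closed[OF subgroup_H] by blast
  ultimately show ?thesis using bounded_auts_iff_displacement[OF _ V] by blast
qed

lemma bounded_auts_Sym_inv:
  assumes B: "B \<subseteq> H" "bounded_auts G T B"
  shows "bounded_auts G T (m_inv Sym ` B)"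
proof -
  obtain V where V: "V \<in> CO_subgroups G T" using B(2) unfolding bounded_auts_def by blast
  obtain M where M: "\<forall>\<beta>\<in>B. CO_dist G (\<beta> ` V) V \<le> M"
    using bounded_auts_iff_displacement[OF B(1) V] B(2) by blast
  have invH: "m_inv Sym ` B \<subseteq> H" using B(1) subgroup.m_inv_closed[OF subgroup_H] by blast
  have "CO_dist G ((inv\<^bsub>Sym\<^esub> \<beta>) ` V) V \<le> M" if \<beta>: "\<beta> \<in> B" for \<beta>
  proof -
    have "CO_dist G ((inv\<^bsub>Sym\<^esub> \<beta>) ` V) V = CO_dist G (\<beta> ` (inv\<^bsub>Sym\<^esub> \<beta>) ` V) (\<beta> ` V)"
      using CO_dist_image_H H_image_CO invH \<beta> B(1) V by (metis image_eqI subsetD)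
    also have "\<dots> = CO_dist G (\<beta> ` V) V"
      using image_image_Sym_inv CO_subgroup_subset_carrier[OF V] \<beta> B(1) CO_dist_commute
      by (metis subsetD)
    finally show ?thesis using M \<beta> by simp
  qed
  then show ?thesis using bounded_auts_iff_displacement[OF invH V] by blast
qed

lemma bounded_auts_Sym_one:
  assumes V: "V \<in> CO_subgroups G T"
  shows "bounded_auts G T {\<one>\<^bsub>Sym\<^esub>}"
proof -
  have "CO_dist G (\<one>\<^bsub>Sym\<^esub> ` V) V = 0"
    using image_Sym_one[OF CO_subgroup_subset_carrier[OF V]] CO_dist_self[OF is_group CO_subgroup[OF V]]
    by simp
  then have "\<forall>\<beta>\<in>{\<one>\<^bsub>Sym\<^esub>}. CO_dist G (\<beta> ` V) V \<le> 0" by simp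
  then show ?thesis
    using bounded_auts_iff_displacement[OF _ V] subgroup.one_closed[OF subgroup_H] by blast
qed

lemma conj_class_subset:
  "\<phi> \<in> H \<Longrightarrow> conj_class G H \<phi> \<subseteq> H"
  unfolding conj_class_def
  by (auto intro!: subgroup.m_closed[OF subgroup_H] subgroup.m_inv_closed[OF subgroup_H])

lemma conj_class_Sym_one: "conj_class G H \<one>\<^bsub>Sym\<^esub> \<subseteq> {\<one>\<^bsub>Sym\<^esub>}"
  unfolding conj_class_def using H_Sym_carrier by auto

lemma conj_class_Sym_mult:
  assumes "\<phi> \<in> H" "\<theta> \<in> H"
  shows "conj_class G H (\<phi> \<otimes>\<^bsub>Sym\<^esub> \<theta>)
    \<subseteq> {\<beta> \<otimes>\<^bsub>Sym\<^esub> \<gamma> | \<beta> \<gamma>. \<beta> \<in> conj_class G H \<phi> \<and> \<gamma> \<in> conj_class G H \<theta>}"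
proof
  fix x assume "x \<in> conj_class G H (\<phi> \<otimes>\<^bsub>Sym\<^esub> \<theta>)"
  then obtain \<psi> where \<psi>: "\<psi> \<in> H" and x: "x = \<psi> \<otimes>\<^bsub>Sym\<^esub> (\<phi> \<otimes>\<^bsub>Sym\<^esub> \<theta>) \<otimes>\<^bsub>Sym\<^esub> inv\<^bsub>Sym\<^esub> \<psi>"
    unfolding conj_class_def by blast
  have "x = (\<psi> \<otimes>\<^bsub>Sym\<^esub> \<phi> \<otimes>\<^bsub>Sym\<^esub> inv\<^bsub>Sym\<^esub> \<psi>) \<otimes>\<^bsub>Sym\<^esub> (\<psi> \<otimes>\<^bsub>Sym\<^esub> \<theta> \<otimes>\<^bsub>Sym\<^esub> inv\<^bsub>Sym\<^esub> \<psi>)"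
    using H_Sym_carrier assms \<psi> by (simp add: x Sym.m_assoc Sym.inv_solve_left)
  then show "x \<in> {\<beta> \<otimes>\<^bsub>Sym\<^esub> \<gamma> | \<beta> \<gamma>. \<beta> \<in> conj_class G H \<phi> \<and> \<gamma> \<in> conj_class G H \<theta>}"
    unfolding conj_class_def using \<psi> by blast
qed

lemma conj_class_Sym_inv:
  assumes "\<phi> \<in> H"
  shows "conj_class G H (inv\<^bsub>Sym\<^esub> \<phi>) \<subseteq> m_inv Sym ` conj_class G H \<phi>"
proof
  fix x assume "x \<in> conj_class G H (inv\<^bsub>Sym\<^esub> \<phi>)"
  then obtain \<psi> where \<psi>: "\<psi> \<in> H" and x: "x = \<psi> \<otimes>\<^bsub>Sym\<^esub> inv\<^bsub>Sym\<^esub> \<phi> \<otimes>\<^bsub>Sym\<^esub> inv\<^bsub>Sym\<^esub> \<psi>"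
    unfolding conj_class_def by blast
  have "x = inv\<^bsub>Sym\<^esub> (\<psi> \<otimes>\<^bsub>Sym\<^esub> \<phi> \<otimes>\<^bsub>Sym\<^esub> inv\<^bsub>Sym\<^esub> \<psi>)"
    using H_Sym_carrier assms \<psi> by (simp add: x Sym.inv_mult_group Sym.m_assoc)
  then show "x \<in> m_inv Sym ` conj_class G H \<phi>"
    unfolding conj_class_def using \<psi> by blast
qed

lemma conj_class_conj:
  assumes "\<psi> \<in> H" "\<phi> \<in> H"
  shows "conj_class G H (\<psi> \<otimes>\<^bsub>Sym\<^esub> \<phi> \<otimes>\<^bsub>Sym\<^esub> inv\<^bsub>Sym\<^esub> \<psi>) \<subseteq> conj_class G H \<phi>"
proof
  fix y assume "y \<in> conj_class G H (\<psi> \<otimes>\<^bsub>Sym\<^esub> \<phi> \<otimes>\<^bsub>Sym\<^esub> inv\<^bsub>Sym\<^esub> \<psi>)"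
  then obtain \<rho> where \<rho>: "\<rho> \<in> H"
    and y: "y = \<rho> \<otimes>\<^bsub>Sym\<^esub> (\<psi> \<otimes>\<^bsub>Sym\<^esub> \<phi> \<otimes>\<^bsub>Sym\<^esub> inv\<^bsub>Sym\<^esub> \<psi>) \<otimes>\<^bsub>Sym\<^esub> inv\<^bsub>Sym\<^esub> \<rho>"
    unfolding conj_class_def by blast
  have "y = (\<rho> \<otimes>\<^bsub>Sym\<^esub> \<psi>) \<otimes>\<^bsub>Sym\<^esub> \<phi> \<otimes>\<^bsub>Sym\<^esub> inv\<^bsub>Sym\<^esub> (\<rho> \<otimes>\<^bsub>Sym\<^esub> \<psi>)"
    using H_Sym_carrier assms \<rho> by (simp add: y Sym.inv_mult_group Sym.m_assoc)
  then show "y \<in> conj_class G H \<phi>"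
    unfolding conj_class_def using subgroup.m_closed[OF subgroup_H \<rho> assms(1)] by blast
qed

lemma subgroup_FC_d:
  assumes "CO_subgroups G T \<noteq> {}"
  shows "subgroup (FC_d G T H) Sym"
proof (rule Sym.subgroupI)
  show "FC_d G T H \<subseteq> carrier Sym" using H_Sym_carrier by (auto simp: FC_d_def)
  have "bounded_auts G T (conj_class G H \<one>\<^bsub>Sym\<^esub>)"
    using assms bounded_auts_mono[OF conj_class_Sym_one bounded_auts_Sym_one] by blast
  then have "\<one>\<^bsub>Sym\<^esub> \<in> FC_d G T H"
    using subgroup.one_closed[OF subgroup_H] by (simp add: FC_d_def)
  then show "FC_d G T H \<noteq> {}" by blast
next
  fix \<phi> assume "\<phi> \<in> FC_d G T H"
  then have \<phi>: "\<phi> \<in> H" "bounded_auts G T (conj_class G H \<phi>)" by (simp_all add: FC_d_def)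
  have "bounded_auts G T (conj_class G H (inv\<^bsub>Sym\<^esub> \<phi>))"
    using bounded_auts_mono[OF conj_class_Sym_inv[OF \<phi>(1)]
        bounded_auts_Sym_inv[OF conj_class_subset[OF \<phi>(1)] \<phi>(2)]] .
  then show "inv\<^bsub>Sym\<^esub> \<phi> \<in> FC_d G T H"
    using subgroup.m_inv_closed[OF subgroup_H \<phi>(1)] by (simp add: FC_d_def)
next
  fix \<phi> \<theta> assume "\<phi> \<in> FC_d G T H" "\<theta> \<in> FC_d G T H"
  then have \<phi>: "\<phi> \<in> H" "bounded_auts G T (conj_class G H \<phi>)"
    and \<theta>: "\<theta> \<in> H" "bounded_auts G T (conj_class G H \<theta>)"
    by (simp_all add: FC_d_def)
  have "bounded_auts G T (conj_class G H (\<phi> \<otimes>\<^bsub>Sym\<^esub> \<theta>))"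
    using bounded_auts_mono[OF conj_class_Sym_mult[OF \<phi>(1) \<theta>(1)]
        bounded_auts_Sym_mult[OF conj_class_subset[OF \<phi>(1)] \<phi>(2) conj_class_subset[OF \<theta>(1)] \<theta>(2)]] .
  then show "\<phi> \<otimes>\<^bsub>Sym\<^esub> \<theta> \<in> FC_d G T H"
    using subgroup.m_closed[OF subgroup_H \<phi>(1) \<theta>(1)] by (simp add: FC_d_def)
qed

lemma normal_FC_d:
  assumes "CO_subgroups G T \<noteq> {}"
  shows "FC_d G T H \<lhd> Sym\<lparr>carrier := H\<rparr>"
proof -
  have FC_H: "FC_d G T H \<subseteq> H" by (auto simp: FC_d_def)
  have grp: "group (Sym\<lparr>carrier := H\<rparr>)"
    using subgroup.subgroup_is_group[OF subgroup_H Sym.is_group] .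
  show ?thesis
  proof (subst group.normal_inv_iff[OF grp], intro conjI ballI)
    show "subgroup (FC_d G T H) (Sym\<lparr>carrier := H\<rparr>)"
      using Sym.subgroup_incl[OF subgroup_FC_d[OF assms] subgroup_H FC_H] .
    fix \<psi> \<phi> assume "\<psi> \<in> carrier (Sym\<lparr>carrier := H\<rparr>)" "\<phi> \<in> FC_d G T H"
    then have \<psi>: "\<psi> \<in> H" and \<phi>: "\<phi> \<in> H" "bounded_auts G T (conj_class G H \<phi>)"
      by (simp_all add: FC_d_def)
    have "bounded_auts G T (conj_class G H (\<psi> \<otimes>\<^bsub>Sym\<^esub> \<phi> \<otimes>\<^bsub>Sym\<^esub> inv\<^bsub>Sym\<^esub> \<psi>))"
      using bounded_auts_mono[OF conj_class_conj[OF \<psi> \<phi>(1)] \<phi>(2)] .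
    moreover have "\<psi> \<otimes>\<^bsub>Sym\<^esub> \<phi> \<otimes>\<^bsub>Sym\<^esub> inv\<^bsub>Sym\<^esub> \<psi> \<in> H"
      using \<psi> \<phi>(1) subgroup.m_closed[OF subgroup_H] subgroup.m_inv_closed[OF subgroup_H] by blast
    ultimately show "\<psi> \<otimes>\<^bsub>Sym\<lparr>carrier := H\<rparr>\<^esub> \<phi> \<otimes>\<^bsub>Sym\<lparr>carrier := H\<rparr>\<^esub>
        inv\<^bsub>Sym\<lparr>carrier := H\<rparr>\<^esub> \<psi> \<in> FC_d G T H"
      using Sym.m_inv_consistent[OF subgroup_H \<psi>] by (simp add: FC_d_def)
  qed
qed

end

theorem proposition1:
  fixes G :: "'a monoid" and T :: "'a topology" and H :: "('a \<Rightarrow> 'a) set"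
  assumes "topological_group G T"
    and "totally_disconnected_space T"
    and "locally_compact_space T"
    and "subgroup H (BijGroup (carrier G))"
    and "H \<subseteq> top_auto G T"
  shows "FC_d G T H \<lhd> (BijGroup (carrier G))\<lparr>carrier := H\<rparr> \<and>
         FC_d G T (FC_d G T H) = FC_d G T H"
proof -
  interpret topgroup_autos G T H
    using assms by (simp add: topgroup_autos_def topgroup_def topgroup_autos_axioms_def)
  show ?thesis
    using normal_FC_d[OF van_Dantzig[OF assms(2,3)]] FC_d_FC_d by simp
qed

end
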